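(* Let $s \geq 2$ and let $b_1,\dots,b_s \geq 2$ be pairwise coprime integers, $B = b_1\cdots b_s$, $B^{(i)} = B/b_i$, and $\tau_i = \min\{1 \leq k < B^{(i)} : b_i^k \equiv 1 \pmod{B^{(i)}}\}$ for $i=1,\dots,s$. Let $m \geq B$ be an integer, $y_i = \sum_{j=1}^m b_i^{-j\tau_i}$ and $\boldsymbol{y} = (y_1,\dots,y_s)$. For a vector $\boldsymbol{r} = (r_1,\dots,r_s)$ of positive integers put $B_{\boldsymbol{r}} = \prod_{i=1}^s b_i^{r_i}$ and let $M_{i,\boldsymbol{r}}$ be an integer with $M_{i,\boldsymbol{r}}\, (B_{\boldsymbol{r}} b_i^{-r_i}) \equiv 1 \pmod{b_i^{r_i}}$. For $\boldsymbol{k} = (k_1,\dots,k_s) \in \{1,\dots,m\}^s$ write $\boldsymbol{\tau}\cdot\boldsymbol{k} = (\tau_1k_1,\dots,\tau_sk_s)$, and for an integer $\ell\ge1$ write $\boldsymbol{\tau}\ell = (\tau_1\ell,\dots,\tau_s\ell)$. Let $A_{\boldsymbol{k}} \in [0, B_{\boldsymbol{\tau}\cdot\boldsymbol{k}})$ be the integer with \[ A_{\boldsymbol{k}} \equiv -\sum_{i=1}^s M_{i,\boldsymbol{\tau}\cdot\boldsymbol{k}}\, B_{\boldsymbol{\tau}\cdot\boldsymbol{k}}\, b_i^{-1} \pmod{B_{\boldsymbol{\tau}\cdot\boldsymbol{k}}}, \] and let $\tilde{y}_m \in [0, B_{\boldsymbol{\tau}(m+1)})$ be the integer with \[ \tilde{y}_m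 \equiv \sum_{i=1}^s M_{i,\boldsymbol{\tau}(m+1)}\, B_{\boldsymbol{\tau}(m+1)}\, b_i^{-\tau_i(m+1)} \sum_{j=1}^{m+1} b_i^{j\tau_i - 1} \pmod{B_{\boldsymbol{\tau}(m+1)}}. \] Define \[ \alpha_m := \frac{1}{B_{\boldsymbol{\tau}m}} \sum_{N=1}^{B_{\boldsymbol{\tau}m}} \Delta\big(\boldsymbol{y},(H_s(n))_{n=\tilde{y}_m}^{\tilde{y}_m + N -1}\big). \] Then \[ \alpha_m = \sum_{1 \leq k_1, \ldots, k_s \leq m} \Big(\frac{1}{2} - \frac{A_{\boldsymbol{k}}}{B_{\boldsymbol{\tau} \cdot \boldsymbol{k}}}-\frac{1}{2 B_{\boldsymbol{\tau} \cdot \boldsymbol{k}}}\Big). \]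
   Context: For an integer $b \geq 2$, the radical inverse function is $\phi_b(n) = \sum_{j\geq 0} n_j b^{-j-1}$ where $n=\sum_{j\ge0} n_j b^j$, $n_j\in\{0,\dots,b-1\}$. The $s$-dimensional Halton sequence in bases $b_1,\dots,b_s$ is $H_s(n) = (\phi_{b_1}(n),\dots,\phi_{b_s}(n))$, $n\in\mathbb{N}_0$. For integers $a \geq 0$, $N\geq1$ and $\boldsymbol{y}=(y_1,\dots,y_s)$, $\Delta(\boldsymbol{y},(H_s(n))_{n=a}^{a+N-1}) = \sum_{n=a}^{a+N-1}\big(\chi_{[0,y_1)\times\cdots\times[0,y_s)}(H_s(n)) - y_1\cdots y_s\big)$. *)

theory Defs
  imports Complex_Main "HOL-Library.FuncSet" "HOL-Number_Theory.Cong"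
begin

text \<open>Indices are 0-based: the bases are b 0, ..., b (s-1).\<close>

text \<open>Radical inverse in base b: sum of digits n_j b^(-j-1). The digits n_j = (n div b^j) mod b
  vanish for j > n (as b >= 2), so the sum over j <= n is the full digit sum.\<close>
definition radinv :: "nat \<Rightarrow> nat \<Rightarrow> real" where
  "radinv b n = (\<Sum>j\<le>n. real ((n div b ^ j) mod b) / real b ^ (j + 1))"

definition halton :: "(nat \<Rightarrow> nat) \<Rightarrow> nat \<Rightarrow> nat \<Rightarrow> real" where
  "halton b n i = radinv (b i) n"

definition discr :: "nat \<Rightarrow> (nat \<Rightarrow> nat) \<Rightarrow> (nat \<Rightarrow> real) \<Rightarrow> nat \<Rightarrow> nat \<Rightarrow> real" where
  "discr s b y a N =
     (\<Sum>n\<in>{a..<a+N}. (if (\<forall>i<s. 0 \<le> halton b n i \<and> halton b n i < y i) then 1 else 0)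
                      - (\<Prod>i<s. y i))"

definition Bvec :: "nat \<Rightarrow> (nat \<Rightarrow> nat) \<Rightarrow> (nat \<Rightarrow> nat) \<Rightarrow> nat" where
  "Bvec s b r = (\<Prod>i<s. b i ^ r i)"

definition Bhat :: "nat \<Rightarrow> (nat \<Rightarrow> nat) \<Rightarrow> nat \<Rightarrow> nat" where
  "Bhat s b i = (\<Prod>j<s. b j) div b i"

definition tau :: "nat \<Rightarrow> (nat \<Rightarrow> nat) \<Rightarrow> nat \<Rightarrow> nat" where
  "tau s b i = (LEAST k. 1 \<le> k \<and> k < Bhat s b i \<and> [b i ^ k = 1] (mod Bhat s b i))"

definition tau_k :: "nat \<Rightarrow> (nat \<Rightarrow> nat) \<Rightarrow> (nat \<Rightarrow> nat) \<Rightarrow> nat \<Rightarrow> nat" where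
  "tau_k s b k = (\<lambda>i. tau s b i * k i)"

definition tau_l :: "nat \<Rightarrow> (nat \<Rightarrow> nat) \<Rightarrow> nat \<Rightarrow> nat \<Rightarrow> nat" where
  "tau_l s b l = (\<lambda>i. tau s b i * l)"

definition Acoef :: "nat \<Rightarrow> (nat \<Rightarrow> nat) \<Rightarrow> (nat \<Rightarrow> (nat \<Rightarrow> nat) \<Rightarrow> int) \<Rightarrow> (nat \<Rightarrow> nat) \<Rightarrow> int" where
  "Acoef s b M k =
     (let r = tau_k s b k in
      (- (\<Sum>i<s. M i r * int (Bvec s b r div b i))) mod int (Bvec s b r))"

definition ytil :: "nat \<Rightarrow> (nat \<Rightarrow> nat) \<Rightarrow> (nat \<Rightarrow> (nat \<Rightarrow> nat) \<Rightarrow> int) \<Rightarrow> nat \<Rightarrow> nat" where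
  "ytil s b M m =
     (let r = tau_l s b (m + 1) in
      nat ((\<Sum>i<s. M i r * int (Bvec s b r div b i ^ r i)
                 * (\<Sum>j=1..m+1. int (b i) ^ (j * tau s b i - 1))) mod int (Bvec s b r)))"

definition ypt :: "nat \<Rightarrow> (nat \<Rightarrow> nat) \<Rightarrow> nat \<Rightarrow> nat \<Rightarrow> real" where
  "ypt s b m i = (\<Sum>j=1..m. 1 / real (b i) ^ (j * tau s b i))"

definition alpha :: "nat \<Rightarrow> (nat \<Rightarrow> nat) \<Rightarrow> (nat \<Rightarrow> (nat \<Rightarrow> nat) \<Rightarrow> int) \<Rightarrow> nat \<Rightarrow> real" where
  "alpha s b M m =
     (let BB = Bvec s b (tau_l s b m) in
      (1 / real BB) * (\<Sum>N=1..BB. discr s b (ypt s b m) (ytil s b M m) N))"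

end

theory Submission
  imports Defs "HOL-Number_Theory.Number_Theory"
begin

text \<open>In base \<open>b\<^sub>i\<close> the point \<open>y\<^sub>i = sum_{j=1..m} b\<^sub>i^(-j tau\<^sub>i)\<close> has the digit 1 exactly at
  the positions \<open>j tau\<^sub>i\<close>. Hence \<open>[0, y\<^sub>i)\<close> is the disjoint union over \<open>k = 1..m\<close> of
  elementary intervals of length \<open>b\<^sub>i^(-k tau\<^sub>i)\<close>, and the radical inverse of \<open>n\<close> falls
  into the \<open>k\<close>-th one iff \<open>n\<close> lies in a certain residue class modulo \<open>b\<^sub>i^(k tau\<^sub>i)\<close>.
  Multiplying out the box and using the Chinese remainder theorem, the indicator of \<open>[0, y)\<close>
  at \<open>H\<^sub>s(n)\<close> is a sum over \<open>k\<close> of indicators of single residue classes modulo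
  \<open>B_{tau.k}\<close>, and the volume of the box splits in the same way; the coefficients \<open>M\<close> make
  the class for \<open>k\<close> that of \<open>ytil + A\<^sub>k\<close>. So the local discrepancy is a sum of
  one-dimensional sawtooth discrepancies of residue classes, and averaging each of them over
  \<open>N = 1..B_{tau m}\<close>, a whole number of periods, gives \<open>1/2 - A\<^sub>k/B_{tau.k} - 1/(2 B_{tau.k})\<close>.\<close>

section \<open>Radical inverse and digit reversal\<close>

lemma less_pow_self: "b \<ge> 2 \<Longrightarrow> n < b ^ n"
  using less_exp[of n] power_mono[of 2 b n] by linarith

lemma radinv_eq_sum_lessThan:
  assumes b: "b \<ge> 2" and n: "n < b ^ K"
  shows "radinv b n = (\<Sum>j<K. real ((n div b ^ j) mod b) / real b ^ (j + 1))"
proof -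
  define f where "f j = real ((n div b ^ j) mod b) / real b ^ (j + 1)" for j
  have vanish: "f j = 0" if "n < b ^ i" "i \<le> j" for i j
  proof -
    have "b ^ i \<le> b ^ j"
      using that(2) b by (intro power_increasing) auto
    then show ?thesis
      using that(1) by (simp add: f_def)
  qed
  have above_n: "f j = 0" if "n < j" for j
    using less_pow_self[OF b, of n] that by (intro vanish) auto
  have above_K: "f j = 0" if "K \<le> j" for j
    using n that by (rule vanish)
  have "sum f {..n} = sum f {..<max (Suc n) K}"
    by (intro sum.mono_neutral_left) (auto simp: not_le intro: above_n)
  also have "\<dots> = sum f {..<K}"
    by (intro sum.mono_neutral_right) (auto intro: above_K)
  finally show ?thesis unfolding radinv_def f_def .
qed

lemma radinv_div_base:
  assumes b: "b \<ge> 2"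
  shows "radinv b n = (real (n mod b) + radinv b (n div b)) / real b"
proof -
  have "n < b ^ n * b"
    using less_pow_self[OF b, of n] b by (simp add: less_le_trans)
  then have "n div b < b ^ n"
    using b by (simp add: div_less_iff_less_mult)
  then have rec: "radinv b (n div b) = (\<Sum>j<n. real ((n div b div b ^ j) mod b) / real b ^ (j + 1))"
    using radinv_eq_sum_lessThan[OF b] by blast
  have "radinv b n = (\<Sum>j<Suc n. real ((n div b ^ j) mod b) / real b ^ (j + 1))"
    using less_pow_self[OF b, of n] b by (intro radinv_eq_sum_lessThan[OF b]) (simp add: less_le_trans)
  also have "\<dots> = real (n mod b) / real b
      + (\<Sum>j<n. real ((n div b div b ^ j) mod b) / real b ^ (j + 1)) / real b"
    by (subst sum.lessThan_Suc_shift) (simp add: sum_divide_distrib div_mult2_eq mult_ac)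
  finally show ?thesis
    by (simp add: rec add_divide_distrib)
qed

lemma radinv_nonneg: "radinv b n \<ge> 0"
  unfolding radinv_def by (intro sum_nonneg) auto

lemma radinv_less_1:
  assumes b: "b \<ge> 2"
  shows "radinv b n < 1"
proof (induction n rule: less_induct)
  case (less n)
  show ?case
  proof (cases "n = 0")
    case True
    then show ?thesis by (simp add: radinv_def)
  next
    case False
    then have "radinv b (n div b) < 1"
      using b by (intro less.IH) simp
    moreover have "n mod b < b"
      using b by simp
    then have "real (n mod b) + 1 \<le> real b"
      by linarith
    ultimately show ?thesis
      using b by (subst radinv_div_base[OF b]) simp
  qed
qed

primrec rev_digits :: "nat \<Rightarrow> nat \<Rightarrow> nat \<Rightarrow> nat" where
  "rev_digits b 0 n = 0"
| "rev_digits b (Suc L) n = b ^ L * (n mod b) + rev_digits b L (n div b)"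

lemma radinv_shift:
  assumes b: "b \<ge> 2"
  shows "radinv b n = (real (rev_digits b L n) + radinv b (n div b ^ L)) / real b ^ L"
proof (induction L arbitrary: n)
  case 0
  then show ?case by simp
next
  case (Suc L)
  show ?case
    using b by (subst radinv_div_base[OF b], subst Suc.IH) (simp add: div_mult2_eq field_simps)
qed

lemma mod_pow_Suc: "(n::nat) mod b ^ Suc L = b * ((n div b) mod b ^ L) + n mod b"
  by (simp add: mod_mult2_eq)

lemma rev_digits_eq_0_iff:
  assumes "b > 0"
  shows "rev_digits b L n = 0 \<longleftrightarrow> n mod b ^ L = 0"
proof (induction L arbitrary: n)
  case (Suc L)
  then show ?case
    using assms by (auto simp: mod_pow_Suc)
qed simp

lemma mult_add_eq_mult_add_iff:
  fixes c x x' y y' :: nat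
  assumes "x < c" "x' < c"
  shows "c * y + x = c * y' + x' \<longleftrightarrow> x = x' \<and> y = y'"
proof
  assume h: "c * y + x = c * y' + x'"
  have "x = (c * y + x) mod c"
    using assms(1) by simp
  also have "\<dots> = x'"
    unfolding h using assms(2) by simp
  finally show "x = x' \<and> y = y'"
    using h assms by simp
qed simp

lemma rev_digits_eq_1_iff:
  assumes b: "b \<ge> 2" and L: "L \<ge> 1"
  shows "rev_digits b L n = 1 \<longleftrightarrow> n mod b ^ L = b ^ (L - 1)"
  using L
proof (induction L arbitrary: n)
  case (Suc L)
  show ?case
  proof (cases "L = 0")
    case False
    have "b ^ L \<ge> 2"
      using b False power_increasing[of 1 L b] by simp
    then have "rev_digits b (Suc L) n = 1 \<longleftrightarrow> n mod b = 0 \<and> rev_digits b L (n div b) = 1"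
    proof (intro iffI)
      assume one: "rev_digits b (Suc L) n = 1"
      have "n mod b = 0"
      proof (rule ccontr)
        assume "n mod b \<noteq> 0"
        then have "b ^ L * 1 \<le> b ^ L * (n mod b)"
          by (intro mult_le_mono2) simp
        with one \<open>b ^ L \<ge> 2\<close> show False
          by simp
      qed
      with one show "n mod b = 0 \<and> rev_digits b L (n div b) = 1"
        by simp
    qed simp
    also have "\<dots> \<longleftrightarrow> n mod b = 0 \<and> (n div b) mod b ^ L = b ^ (L - 1)"
      using Suc.IH False by simp
    also have "\<dots> \<longleftrightarrow> n mod b ^ Suc L = b * b ^ (L - 1)"
      unfolding mod_pow_Suc using b mult_add_eq_mult_add_iff[of "n mod b" b 0 "n div b mod b ^ L"]
      by auto
    finally show ?thesis
      using False by (simp flip: power_Suc)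
  qed simp
qed simp

section \<open>Elementary intervals below a geometric point\<close>

definition geom_point :: "nat \<Rightarrow> nat \<Rightarrow> nat \<Rightarrow> real" where
  "geom_point b t m = (\<Sum>j<m. 1 / real b ^ ((j + 1) * t))"

definition geom_code :: "nat \<Rightarrow> nat \<Rightarrow> nat \<Rightarrow> nat" where
  "geom_code b t k = (\<Sum>j<k. b ^ ((j + 1) * t - 1))"

lemma geom_point_Suc: "geom_point b t (Suc m) = (1 + geom_point b t m) / real b ^ t"
  unfolding geom_point_def
  by (subst sum.lessThan_Suc_shift) (simp add: add_divide_distrib sum_divide_distrib power_add mult_ac)

lemma geom_point_nonneg: "geom_point b t m \<ge> 0"
  unfolding geom_point_def by (intro sum_nonneg) auto

lemma geom_point_less_1:
  assumes b: "b \<ge> 2" and t: "t \<ge> 1"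
  shows "geom_point b t m < 1"
proof (induction m)
  case 0
  then show ?case by (simp add: geom_point_def)
next
  case (Suc m)
  have "real b ^ 1 \<le> real b ^ t"
    using b t by (intro power_increasing) auto
  then have "1 + geom_point b t m < real b ^ t"
    using Suc.IH b unfolding power_one_right by linarith
  then show ?case
    using b by (simp add: geom_point_Suc divide_less_eq_1)
qed

lemma geom_code_Suc:
  assumes "t \<ge> 1"
  shows "geom_code b t (Suc k) = b ^ (t - 1) + b ^ t * geom_code b t k"
proof -
  have "(Suc j + 1) * t - 1 = t + ((j + 1) * t - 1)" for j
    using assms by (simp add: algebra_simps)
  then show ?thesis
    unfolding geom_code_def by (subst sum.lessThan_Suc_shift) (simp add: power_add sum_distrib_left)
qed

lemma geom_code_less:
  assumes b: "b \<ge> 2" and t: "t \<ge> 1"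
  shows "geom_code b t k < b ^ (k * t)"
proof (induction k)
  case 0
  then show ?case by (simp add: geom_code_def)
next
  case (Suc k)
  have "b ^ (t - 1) < b ^ t"
    using b t by (intro power_strict_increasing) auto
  then have "geom_code b t (Suc k) < b ^ t * (geom_code b t k + 1)"
    by (simp add: geom_code_Suc[OF t] algebra_simps)
  also have "\<dots> \<le> b ^ t * b ^ (k * t)"
    using Suc.IH by (intro mult_le_mono2) simp
  finally show ?case
    by (simp add: power_add)
qed

lemma geom_code_cong:
  assumes t: "t \<ge> 1" and "k \<le> N"
  shows "[geom_code b t N = geom_code b t k] (mod b ^ (k * t))"
proof -
  have "geom_code b t N = geom_code b t k + (\<Sum>j\<in>{k..<N}. b ^ ((j + 1) * t - 1))"
    unfolding geom_code_def using assms(2)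
    by (metis atLeast0LessThan le0 sum.atLeastLessThan_concat)
  moreover have "b ^ (k * t) dvd (\<Sum>j\<in>{k..<N}. b ^ ((j + 1) * t - 1))"
  proof (intro dvd_sum le_imp_power_dvd)
    fix j assume "j \<in> {k..<N}"
    then have "k * t \<le> j * t"
      by simp
    moreover have "(j + 1) * t = j * t + t"
      by simp
    ultimately show "k * t \<le> (j + 1) * t - 1"
      using t by linarith
  qed
  ultimately show ?thesis
    by (simp add: cong_add_lcancel_0_nat cong_0_iff)
qed

lemma geom_code_pred:
  assumes "k \<ge> 1"
  shows "geom_code b t k = geom_code b t (k - 1) + b ^ (t * k - 1)"
  using assms by (cases k) (simp_all add: geom_code_def mult.commute)

lemma mod_eq_geom_code_Suc_iff:
  assumes b: "b \<ge> 2" and t: "t \<ge> 1"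
  shows "n mod b ^ ((Suc k + 1) * t) = geom_code b t (Suc k) \<longleftrightarrow>
    n mod b ^ t = b ^ (t - 1) \<and> (n div b ^ t) mod b ^ ((k + 1) * t) = geom_code b t k"
proof -
  have "b ^ ((Suc k + 1) * t) = b ^ t * b ^ ((k + 1) * t)"
    by (simp add: power_add)
  then have "n mod b ^ ((Suc k + 1) * t) = b ^ t * ((n div b ^ t) mod b ^ ((k + 1) * t)) + n mod b ^ t"
    by (simp add: mod_mult2_eq)
  moreover have "geom_code b t (Suc k) = b ^ t * geom_code b t k + b ^ (t - 1)"
    using geom_code_Suc[OF t] by simp
  moreover have "n mod b ^ t < b ^ t" "b ^ (t - 1) < b ^ t"
    using b t by (simp_all add: power_strict_increasing)
  ultimately show ?thesis
    using mult_add_eq_mult_add_iff by auto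
qed

text \<open>The \<open>k\<close>-th summand says that \<open>radinv b n\<close> lies in the elementary interval
  \<open>[geom_point b t k, geom_point b t k + b^(-(k+1) t))\<close>: the reversed digits of
  \<open>geom_code b t k\<close> are those of \<open>geom_point b t k\<close>. These intervals tile \<open>[0, geom_point b t m)\<close>.\<close>

lemma indicator_radinv_less_geom_point:
  assumes b: "b \<ge> 2" and t: "t \<ge> 1"
  shows "(if radinv b n < geom_point b t m then 1 else 0 :: real) =
    (\<Sum>k<m. if n mod b ^ ((k + 1) * t) = geom_code b t k then 1 else 0)"
proof (induction m arbitrary: n)
  case 0
  then show ?case
    using radinv_nonneg[of b n] by (simp add: geom_point_def)
next
  case (Suc m)
  define q where "q = n div b ^ t"
  define u where "u = rev_digits b t n"
  have lhs: "radinv b n < geom_point b t (Suc m) \<longleftrightarrow> real u + radinv b q < 1 + geom_point b t m"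
    using b by (simp add: radinv_shift[OF b, of n t] geom_point_Suc divide_less_cancel u_def q_def)
  have rhs: "(\<Sum>k<Suc m. if n mod b ^ ((k + 1) * t) = geom_code b t k then 1 else 0 :: real) =
      (if n mod b ^ t = 0 then 1 else 0) +
      (\<Sum>k<m. if n mod b ^ t = b ^ (t - 1) \<and> q mod b ^ ((k + 1) * t) = geom_code b t k then 1 else 0)"
    by (simp only: sum.lessThan_Suc_shift mod_eq_geom_code_Suc_iff[OF b t] q_def)
      (simp add: geom_code_def)
  have bounds: "0 \<le> radinv b q" "radinv b q < 1" "0 \<le> geom_point b t m" "geom_point b t m < 1"
    using radinv_nonneg radinv_less_1[OF b] geom_point_nonneg geom_point_less_1[OF b t] by auto
  consider
      (zero) "u = 0" "n mod b ^ t = 0" |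
      (one) "u = 1" "n mod b ^ t = b ^ (t - 1)" |
      (big) "u \<ge> 2" "n mod b ^ t \<noteq> 0" "n mod b ^ t \<noteq> b ^ (t - 1)"
    using rev_digits_eq_0_iff[of b t n] rev_digits_eq_1_iff[OF b t, of n] b unfolding u_def
    by (metis One_nat_def less_2_cases not_less zero_less_numeral less_le_trans)
  then show ?case
  proof cases
    case zero
    then show ?thesis
      using lhs rhs bounds b by simp
  next
    case one
    then show ?thesis
      using lhs rhs Suc.IH[of q] b by simp
  next
    case big
    then show ?thesis
      using lhs rhs bounds by simp
  qed
qed

section \<open>Averaging the discrepancy of a residue class\<close>

lemma sum_partial_sums:
  fixes h :: "nat \<Rightarrow> real"
  shows "(\<Sum>N\<in>{1..P}. \<Sum>j<N. h j) = (\<Sum>j<P. (real P - real j) * h j)"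
proof (induction P)
  case (Suc P)
  have "(\<Sum>j<P. (real P - real j) * h j) + (\<Sum>j<Suc P. h j) =
      (\<Sum>j<Suc P. (real (Suc P) - real j) * h j)"
    by (simp add: sum.distrib[symmetric] algebra_simps)
  then show ?case
    using Suc.IH by simp
qed simp

lemma periodic_shift_mult:
  fixes h :: "nat \<Rightarrow> 'a" and Q r j :: nat
  assumes "\<And>j. h (j + Q) = h j"
  shows "h (j + r * Q) = h j"
  using assms by (induction r arbitrary: j) (simp_all add: add.assoc[symmetric])

lemma weighted_sum_periodic:
  fixes h :: "nat \<Rightarrow> real"
  assumes per: "\<And>j. h (j + Q) = h j" and zero: "(\<Sum>j<Q. h j) = 0"
  shows "(\<Sum>j<R * Q. (real (R * Q) - real j) * h j) = real R * (\<Sum>j<Q. (real Q - real j) * h j)"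
proof -
  define g where "g j = (real (R * Q) - real j) * h j" for j
  have block: "(\<Sum>j\<in>{r * Q..<r * Q + Q}. g j) = (\<Sum>j<Q. (real Q - real j) * h j)" for r
  proof -
    have "(\<Sum>j\<in>{r * Q..<r * Q + Q}. g j) = (\<Sum>j<Q. g (j + r * Q))"
      using sum.shift_bounds_nat_ivl[of g 0 "r * Q" Q] by (simp add: atLeast0LessThan add.commute)
    also have "\<dots> = (\<Sum>j<Q. (real R - real r - 1) * real Q * h j + (real Q - real j) * h j)"
    proof (rule sum.cong)
      fix j
      have "real (R * Q) - real (j + r * Q) = (real R - real r - 1) * real Q + (real Q - real j)"
        by (simp add: algebra_simps)
      then show "g (j + r * Q) = (real R - real r - 1) * real Q * h j + (real Q - real j) * h j"
        unfolding g_def periodic_shift_mult[of h Q, OF per] by (simp add: algebra_simps)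
    qed simp
    finally show ?thesis
      by (simp add: sum.distrib zero flip: sum_distrib_left)
  qed
  have "(\<Sum>j<R * Q. g j) = (\<Sum>r<R. \<Sum>j\<in>{r * Q..<r * Q + Q}. g j)"
    by (rule sum.nat_group[symmetric])
  also have "\<dots> = real R * (\<Sum>j<Q. (real Q - real j) * h j)"
    using block by simp
  finally show ?thesis
    unfolding g_def .
qed

lemma sum_times_indicator_mod:
  fixes f :: "nat \<Rightarrow> real"
  assumes "A < Q"
  shows "(\<Sum>j<Q. f j * (if j mod Q = A then 1 else 0)) = f A"
proof -
  have "(\<Sum>j<Q. f j * (if j mod Q = A then 1 else 0)) = (\<Sum>j<Q. if j = A then f j else 0)"
    by (rule sum.cong) auto
  then show ?thesis
    using assms by simp
qed

lemma weighted_sum_sawtooth: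
  assumes A: "A < Q"
  shows "(\<Sum>j<Q. (real Q - real j) * ((if j mod Q = A then 1 else 0) - 1 / real Q)) =
    real Q - real A - (real Q + 1) / 2"
proof -
  have "2 * (\<Sum>j<Q. real j) = real Q * (real Q - 1)"
    by (induction Q) (simp_all add: algebra_simps)
  then have "(\<Sum>j<Q. (real Q - real j) / real Q) = (real Q + 1) / 2"
    using A by (simp add: sum_subtractf field_simps flip: sum_divide_distrib)
  moreover have "(\<Sum>j<Q. (real Q - real j) * ((if j mod Q = A then 1 else 0) - 1 / real Q)) =
      (\<Sum>j<Q. (real Q - real j) * (if j mod Q = A then 1 else 0)) - (\<Sum>j<Q. (real Q - real j) / real Q)"
    by (simp add: right_diff_distrib sum_subtractf)
  ultimately show ?thesis
    using sum_times_indicator_mod[OF A, of "\<lambda>j. real Q - real j"] by simp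
qed

lemma average_sawtooth:
  fixes Q R A a :: nat
  assumes A: "A < Q" and R: "R > 0"
  shows "1 / real (Q * R) * (\<Sum>N\<in>{1..Q * R}. \<Sum>n\<in>{a..<a + N}.
      (if n mod Q = (a + A) mod Q then 1 else 0) - 1 / real Q) =
    1 / 2 - real A / real Q - 1 / (2 * real Q)"
proof -
  define h where "h j = (if j mod Q = A then 1 else 0) - 1 / real Q" for j
  have Q: "Q > 0"
    using A by simp
  have shift: "(\<Sum>n\<in>{a..<a + N}. (if n mod Q = (a + A) mod Q then 1 else 0) - 1 / real Q) =
      (\<Sum>j<N. h j)" for N
  proof -
    have "(j + a) mod Q = (a + A) mod Q \<longleftrightarrow> j mod Q = A" for j
      using cong_add_lcancel_nat[of a j A Q] A unfolding cong_def by (simp add: add.commute)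
    then show ?thesis
      using sum.shift_bounds_nat_ivl[of "\<lambda>n. (if n mod Q = (a + A) mod Q then 1 else 0) - 1 / real Q" 0 a N]
      by (simp add: h_def atLeast0LessThan add.commute)
  qed
  have "(\<Sum>j<Q. h j) = 0"
    using sum_times_indicator_mod[OF A, of "\<lambda>_. 1"] Q by (simp add: h_def sum_subtractf)
  then have "(\<Sum>j<R * Q. (real (R * Q) - real j) * h j) = real R * (\<Sum>j<Q. (real Q - real j) * h j)"
    by (intro weighted_sum_periodic) (simp_all add: h_def)
  also have "(\<Sum>j<Q. (real Q - real j) * h j) = real Q - real A - (real Q + 1) / 2"
    unfolding h_def by (rule weighted_sum_sawtooth[OF A])
  finally have sum_eq: "(\<Sum>N\<in>{1..Q * R}. \<Sum>n\<in>{a..<a + N}.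
      (if n mod Q = (a + A) mod Q then 1 else 0) - 1 / real Q) =
      real R * (real Q - real A - (real Q + 1) / 2)"
    by (simp only: shift sum_partial_sums mult.commute[of Q R])
  have "1 / real (Q * R) * (real R * (real Q - real A - (real Q + 1) / 2)) =
      1 / 2 - real A / real Q - 1 / (2 * real Q)"
    using Q R by (simp add: field_simps)
  then show ?thesis
    unfolding sum_eq .
qed

section \<open>Chinese remaindering\<close>

lemma prod_pow_div_pow:
  fixes f e :: "'a \<Rightarrow> nat"
  assumes "finite I" "i \<in> I" "f i > 0" "d \<le> e i"
  shows "(\<Prod>j\<in>I. f j ^ e j) div f i ^ d = f i ^ (e i - d) * (\<Prod>j\<in>I - {i}. f j ^ e j)"
proof -
  have "f i ^ e i = f i ^ d * f i ^ (e i - d)"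
    using assms(4) by (simp flip: power_add)
  then have "(\<Prod>j\<in>I. f j ^ e j) = f i ^ d * (f i ^ (e i - d) * (\<Prod>j\<in>I - {i}. f j ^ e j))"
    using assms(1,2) by (simp add: prod.remove)
  then show ?thesis
    using assms(3) by simp
qed

lemma Bvec_div_pow:
  assumes "l < s" "b l > 0" "d \<le> r l"
  shows "Bvec s b r div b l ^ d = b l ^ (r l - d) * (\<Prod>j\<in>{..<s} - {l}. b j ^ r j)"
  unfolding Bvec_def using assms by (intro prod_pow_div_pow) auto

lemma pow_dvd_Bvec_div_pow:
  assumes "i < s" "l < s" "l \<noteq> i" "b l > 0" "d \<le> r l"
  shows "b i ^ r i dvd Bvec s b r div b l ^ d"
  unfolding Bvec_div_pow[where b = b and r = r, OF assms(2,4,5)] using assms(1,3)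
  by (intro dvd_mult dvd_prodI) auto

lemma Bvec_pos: "(\<And>l. l < s \<Longrightarrow> b l > 0) \<Longrightarrow> Bvec s b r > 0"
  unfolding Bvec_def by (intro prod_pos) auto

lemma pow_dvd_Bvec: "i < s \<Longrightarrow> b i ^ r i dvd Bvec s b r"
  unfolding Bvec_def by (intro dvd_prodI) auto

lemma mod_Bvec_cong:
  assumes "i < s"
  shows "[x mod int (Bvec s b r) = x] (mod int (b i ^ r i))"
proof (rule cong_dvd_modulus)
  show "int (b i ^ r i) dvd int (Bvec s b r)"
    using pow_dvd_Bvec[OF assms] by (simp only: of_nat_dvd_iff)
qed (simp add: cong_def)

lemma sum_cong_single:
  fixes T :: "'a \<Rightarrow> int"
  assumes "finite A" "i \<in> A" "\<And>l. l \<in> A \<Longrightarrow> l \<noteq> i \<Longrightarrow> p dvd T l"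
  shows "[sum T A = T i] (mod p)"
proof -
  have "p dvd sum T (A - {i})"
    using assms(3) by (intro dvd_sum) auto
  then show ?thesis
    using assms(1,2) by (simp add: sum.remove cong_add_lcancel_0 cong_0_iff)
qed

lemma sum_Bvec_inverse_cong:
  fixes c X :: "nat \<Rightarrow> int"
  assumes bpos: "\<And>l. l < s \<Longrightarrow> b l > 0" and i: "i < s"
    and inv: "[c i * int (Bvec s b r div b i ^ r i) = 1] (mod int (b i ^ r i))"
  shows "[(\<Sum>l<s. c l * int (Bvec s b r div b l ^ r l) * X l) = X i] (mod int (b i ^ r i))"
proof -
  have "int (b i ^ r i) dvd c l * int (Bvec s b r div b l ^ r l) * X l" if "l < s" "l \<noteq> i" for l
    using pow_dvd_Bvec_div_pow[where b = b and r = r and d = "r l", OF i that(1,2) bpos[OF that(1)]]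
    by (intro dvd_mult2[OF dvd_mult]) (simp only: of_nat_dvd_iff)
  then have "[(\<Sum>l<s. c l * int (Bvec s b r div b l ^ r l) * X l) =
      c i * int (Bvec s b r div b i ^ r i) * X i] (mod int (b i ^ r i))"
    using i by (intro sum_cong_single) auto
  also have "[c i * int (Bvec s b r div b i ^ r i) * X i = 1 * X i] (mod int (b i ^ r i))"
    using inv by (rule cong_mult) simp
  finally show ?thesis
    by simp
qed

lemma cong_prod_coprime_iff:
  fixes x y :: nat
  assumes "finite A" "\<And>i j. i \<in> A \<Longrightarrow> j \<in> A \<Longrightarrow> i \<noteq> j \<Longrightarrow> coprime (m i) (m j)"
  shows "[x = y] (mod (\<Prod>i\<in>A. m i)) \<longleftrightarrow> (\<forall>i\<in>A. [x = y] (mod m i))"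
proof
  show "\<forall>i\<in>A. [x = y] (mod m i)" if "[x = y] (mod (\<Prod>i\<in>A. m i))"
    using that assms(1) by (meson cong_dvd_modulus_nat dvd_prodI)
  show "[x = y] (mod (\<Prod>i\<in>A. m i))" if "\<forall>i\<in>A. [x = y] (mod m i)"
    using that by (intro coprime_cong_prod_nat[OF assms(2)]) auto
qed

section \<open>The box \<open>[0, y)\<close> as a union of residue classes\<close>

lemma ypt_eq_geom_point: "ypt s b m i = geom_point (b i) (tau s b i) m"
  unfolding ypt_def geom_point_def
  using sum.atLeast1_atMost_eq[of "\<lambda>j. 1 / real (b i) ^ (j * tau s b i)" m] by simp

lemma indicator_all_eq_prod:
  fixes s :: nat
  shows "(if \<forall>i<s. P i then 1 else 0 :: real) = (\<Prod>i<s. if P i then 1 else 0)"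
  by (induction s) (auto simp: less_Suc_eq)

lemma prod_ypt_eq_sum:
  "(\<Prod>i<s. ypt s b m i) = (\<Sum>k\<in>{..<s} \<rightarrow>\<^sub>E {1..m}. 1 / real (Bvec s b (tau_k s b k)))"
proof -
  have "(\<Prod>i<s. ypt s b m i) = (\<Prod>i<s. \<Sum>k\<in>{1..m}. 1 / real (b i) ^ (tau s b i * k))"
    unfolding ypt_def by (simp add: mult.commute)
  also have "\<dots> = (\<Sum>k\<in>{..<s} \<rightarrow>\<^sub>E {1..m}. \<Prod>i<s. 1 / real (b i) ^ (tau s b i * k i))"
    by (rule prod_sum_PiE) auto
  finally show ?thesis
    by (simp add: Bvec_def tau_k_def prod_dividef)
qed

lemma Bvec_tau_l_eq_mult:
  assumes "k \<in> {..<s} \<rightarrow>\<^sub>E {1..m}"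
  shows "Bvec s b (tau_l s b m) = Bvec s b (tau_k s b k) * Bvec s b (\<lambda>i. tau s b i * (m - k i))"
proof -
  have "tau s b i * m = tau s b i * k i + tau s b i * (m - k i)" if "i < s" for i
    using assms that by (auto simp: PiE_iff simp flip: add_mult_distrib2)
  then show ?thesis
    unfolding Bvec_def tau_k_def tau_l_def by (simp add: power_add prod.distrib[symmetric])
qed

locale halton_setting =
  fixes s :: nat and b :: "nat \<Rightarrow> nat" and M :: "nat \<Rightarrow> (nat \<Rightarrow> nat) \<Rightarrow> int"
  assumes s_ge_2: "s \<ge> 2"
    and b_ge_2: "\<And>i. i < s \<Longrightarrow> b i \<ge> 2"
    and coprime_b: "\<And>i j. i < s \<Longrightarrow> j < s \<Longrightarrow> i \<noteq> j \<Longrightarrow> coprime (b i) (b j)"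
    and M_inverse: "\<And>r i. (\<forall>j<s. 0 < r j) \<Longrightarrow> i < s \<Longrightarrow>
      [M i r * int (Bvec s b r div b i ^ r i) = 1] (mod int (b i ^ r i))"
begin

lemma b_pos: "i < s \<Longrightarrow> b i > 0"
  using b_ge_2[of i] by simp

lemma tau_pos:
  assumes i: "i < s"
  shows "tau s b i \<ge> 1"
proof -
  define B where "B = Bhat s b i"
  have B_eq: "B = (\<Prod>j\<in>{..<s} - {i}. b j)"
    using i b_pos by (simp add: B_def Bhat_def prod.remove[of "{..<s}" i])
  define j where "j = (if i = 0 then 1 else 0 :: nat)"
  have j: "j \<in> {..<s} - {i}"
    using s_ge_2 by (auto simp: j_def)
  have "B > 0"
    unfolding B_eq using b_pos by (intro prod_pos) auto
  then have "b j \<le> B"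
    using j unfolding B_eq by (intro dvd_imp_le dvd_prodI) auto
  then have "B \<ge> 2"
    using b_ge_2[of j] j by simp
  moreover have "coprime (b i) B"
    unfolding B_eq using coprime_b i by (intro prod_coprime_right) auto
  ultimately have "1 \<le> totient B \<and> totient B < B \<and> [b i ^ totient B = 1] (mod B)"
    using euler_theorem[of "b i" B] by (simp add: totient_less Suc_le_eq)
  then show ?thesis
    unfolding tau_def B_def[symmetric] by (rule LeastI2_ex[OF exI]) simp
qed

lemma tau_k_pos:
  assumes "k \<in> {..<s} \<rightarrow>\<^sub>E {1..m}" "i < s"
  shows "tau_k s b k i > 0"
  using assms tau_pos[of i] by (auto simp: tau_k_def PiE_iff Suc_le_eq)

lemma Acoef_bounds: "0 \<le> Acoef s b M k" "Acoef s b M k < int (Bvec s b (tau_k s b k))"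
  using Bvec_pos[of s b, OF b_pos] by (simp_all add: Acoef_def Let_def)

lemma Acoef_cong:
  assumes k: "k \<in> {..<s} \<rightarrow>\<^sub>E {1..m}" and i: "i < s"
  shows "[Acoef s b M k = - (int (b i) ^ (tau_k s b k i - 1))] (mod int (b i ^ tau_k s b k i))"
proof -
  define r where "r = tau_k s b k"
  have rpos: "\<forall>l<s. r l > 0"
    using tau_k_pos[OF k] by (simp add: r_def)
  have div_base: "Bvec s b r div b l = Bvec s b r div b l ^ r l * b l ^ (r l - 1)" if "l < s" for l
    using Bvec_div_pow[where b = b and r = r and d = 1, OF that b_pos[OF that]]
      Bvec_div_pow[where b = b and r = r and d = "r l", OF that b_pos[OF that]] rpos that
    by (simp add: Suc_le_eq mult.commute)
  have "[Acoef s b M k = - (\<Sum>l<s. M l r * int (Bvec s b r div b l))] (mod int (b i ^ r i))"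
    unfolding Acoef_def Let_def r_def[symmetric] by (rule mod_Bvec_cong[OF i])
  also have "(\<Sum>l<s. M l r * int (Bvec s b r div b l)) =
      (\<Sum>l<s. M l r * int (Bvec s b r div b l ^ r l) * int (b l) ^ (r l - 1))"
    by (rule sum.cong) (simp_all add: div_base)
  also have "[- \<dots> = - (int (b i) ^ (r i - 1))] (mod int (b i ^ r i))"
    using M_inverse[OF rpos i] i
    by (intro cong_minus_minus_iff[THEN iffD2] sum_Bvec_inverse_cong b_pos)
  finally show ?thesis
    unfolding r_def .
qed

lemma ytil_cong:
  assumes i: "i < s" and k: "k \<le> m + 1"
  shows "[ytil s b M m = geom_code (b i) (tau s b i) k] (mod b i ^ (k * tau s b i))"
proof -
  define r where "r = tau_l s b (m + 1)"
  define S where "S l = (\<Sum>j=1..m+1. int (b l) ^ (j * tau s b l - 1))" for l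
  define X where "X = (\<Sum>l<s. M l r * int (Bvec s b r div b l ^ r l) * S l)"
  have "int (ytil s b M m) = X mod int (Bvec s b r)"
    using Bvec_pos[of s b r, OF b_pos] by (simp add: ytil_def r_def S_def X_def Let_def)
  then have "[int (ytil s b M m) = X] (mod int (b i ^ r i))"
    using mod_Bvec_cong[OF i] by simp
  moreover have "[X = S i] (mod int (b i ^ r i))"
  proof -
    have "\<forall>j<s. 0 < r j"
      using tau_pos by (simp add: r_def tau_l_def Suc_le_eq)
    then show ?thesis
      unfolding X_def using M_inverse i by (intro sum_Bvec_inverse_cong b_pos) auto
  qed
  moreover have "S i = int (geom_code (b i) (tau s b i) (m + 1))"
    unfolding S_def geom_code_def of_nat_sum of_nat_power
    using sum.atLeast1_atMost_eq[of "\<lambda>j. int (b i) ^ (j * tau s b i - 1)" "m + 1"] by simp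
  ultimately have "[int (ytil s b M m) = int (geom_code (b i) (tau s b i) (m + 1))] (mod int (b i ^ r i))"
    by (metis cong_trans)
  then have "[ytil s b M m = geom_code (b i) (tau s b i) (m + 1)] (mod b i ^ r i)"
    by (simp only: cong_int_iff)
  moreover have "k * tau s b i \<le> (m + 1) * tau s b i"
    using k by (rule mult_le_mono1)
  then have "b i ^ (k * tau s b i) dvd b i ^ r i"
    unfolding r_def tau_l_def by (simp add: le_imp_power_dvd mult.commute)
  ultimately have "[ytil s b M m = geom_code (b i) (tau s b i) (m + 1)] (mod b i ^ (k * tau s b i))"
    by (rule cong_dvd_modulus_nat)
  also have "[geom_code (b i) (tau s b i) (m + 1) = geom_code (b i) (tau s b i) k] (mod b i ^ (k * tau s b i))"
    using tau_pos[OF i] k by (rule geom_code_cong)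
  finally show ?thesis .
qed

text \<open>\<open>ytil\<close> reduces to the code of \<open>y\<^sub>i\<close> truncated after \<open>k\<^sub>i\<close> blocks, and \<open>A\<^sub>k\<close>
  removes the last digit 1 of that code.\<close>

lemma ytil_add_Acoef_mod:
  assumes k: "k \<in> {..<s} \<rightarrow>\<^sub>E {1..m}" and i: "i < s"
  shows "(ytil s b M m + nat (Acoef s b M k)) mod b i ^ (tau s b i * k i) =
    geom_code (b i) (tau s b i) (k i - 1)"
proof -
  define t where "t = tau s b i"
  have ki: "1 \<le> k i" "k i \<le> m"
    using k i by (auto simp: PiE_iff)
  have "[ytil s b M m = geom_code (b i) t (k i)] (mod b i ^ (t * k i))"
    using ytil_cong[OF i, of "k i" m] ki by (simp add: t_def mult.commute)
  then have "[int (ytil s b M m) = int (geom_code (b i) t (k i - 1)) + int (b i) ^ (t * k i - 1)]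
      (mod int (b i ^ (t * k i)))"
    using geom_code_pred[OF ki(1), of "b i" t] by (simp flip: cong_int_iff)
  moreover have "[Acoef s b M k = - (int (b i) ^ (t * k i - 1))] (mod int (b i ^ (t * k i)))"
    using Acoef_cong[OF k i] by (simp add: t_def tau_k_def)
  ultimately have "[int (ytil s b M m) + Acoef s b M k = int (geom_code (b i) t (k i - 1))]
      (mod int (b i ^ (t * k i)))"
    using cong_add by fastforce
  then have "[ytil s b M m + nat (Acoef s b M k) = geom_code (b i) t (k i - 1)] (mod b i ^ (t * k i))"
    using Acoef_bounds(1) by (simp flip: cong_int_iff)
  moreover have "geom_code (b i) t (k i - 1) < b i ^ (t * k i)"
  proof -
    have "geom_code (b i) t (k i - 1) < b i ^ ((k i - 1) * t)"
      using b_ge_2[OF i] tau_pos[OF i] by (simp add: t_def geom_code_less)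
    also have "\<dots> \<le> b i ^ (t * k i)"
      using b_ge_2[OF i] by (intro power_increasing) (auto simp: algebra_simps)
    finally show ?thesis .
  qed
  ultimately show ?thesis
    by (simp add: cong_def t_def)
qed

lemma mod_Bvec_tau_k_eq_iff:
  assumes k: "k \<in> {..<s} \<rightarrow>\<^sub>E {1..m}"
  shows "n mod Bvec s b (tau_k s b k) = (ytil s b M m + nat (Acoef s b M k)) mod Bvec s b (tau_k s b k) \<longleftrightarrow>
    (\<forall>i<s. n mod b i ^ (tau s b i * k i) = geom_code (b i) (tau s b i) (k i - 1))"
proof -
  have "[n = ytil s b M m + nat (Acoef s b M k)] (mod Bvec s b (tau_k s b k)) \<longleftrightarrow>
      (\<forall>i\<in>{..<s}. [n = ytil s b M m + nat (Acoef s b M k)] (mod b i ^ (tau s b i * k i)))"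
    unfolding Bvec_def tau_k_def using coprime_b by (intro cong_prod_coprime_iff) auto
  moreover have "[n = ytil s b M m + nat (Acoef s b M k)] (mod b i ^ (tau s b i * k i)) \<longleftrightarrow>
      n mod b i ^ (tau s b i * k i) = geom_code (b i) (tau s b i) (k i - 1)" if "i < s" for i
    using ytil_add_Acoef_mod[OF k that] by (simp add: cong_def)
  ultimately show ?thesis
    unfolding cong_def[of n] by auto
qed

lemma indicator_halton_box:
  "(if \<forall>i<s. 0 \<le> halton b n i \<and> halton b n i < ypt s b m i then 1 else 0 :: real) =
    (\<Sum>k\<in>{..<s} \<rightarrow>\<^sub>E {1..m}. if n mod Bvec s b (tau_k s b k) =
      (ytil s b M m + nat (Acoef s b M k)) mod Bvec s b (tau_k s b k) then 1 else 0)"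
proof -
  define g where "g i k = (if n mod b i ^ (tau s b i * k) = geom_code (b i) (tau s b i) (k - 1)
    then 1 else 0 :: real)" for i k
  have one_dim: "(if radinv (b i) n < ypt s b m i then 1 else 0 :: real) = (\<Sum>k\<in>{1..m}. g i k)"
    if "i < s" for i
    unfolding ypt_eq_geom_point indicator_radinv_less_geom_point[OF b_ge_2[OF that] tau_pos[OF that]]
    using sum.atLeast1_atMost_eq[of "g i" m] by (simp add: g_def mult.commute)
  have "(if \<forall>i<s. 0 \<le> halton b n i \<and> halton b n i < ypt s b m i then 1 else 0 :: real) =
      (\<Prod>i<s. \<Sum>k\<in>{1..m}. g i k)"
    unfolding indicator_all_eq_prod halton_def using radinv_nonneg one_dim by simp
  also have "\<dots> = (\<Sum>k\<in>{..<s} \<rightarrow>\<^sub>E {1..m}. \<Prod>i<s. g i (k i))"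
    by (rule prod_sum_PiE) auto
  also have "\<dots> = (\<Sum>k\<in>{..<s} \<rightarrow>\<^sub>E {1..m}. if n mod Bvec s b (tau_k s b k) =
      (ytil s b M m + nat (Acoef s b M k)) mod Bvec s b (tau_k s b k) then 1 else 0)"
    unfolding g_def indicator_all_eq_prod[symmetric]
    using mod_Bvec_tau_k_eq_iff by (intro sum.cong) auto
  finally show ?thesis .
qed

lemma discr_ypt_eq_sum:
  "discr s b (ypt s b m) a N = (\<Sum>k\<in>{..<s} \<rightarrow>\<^sub>E {1..m}. \<Sum>n\<in>{a..<a + N}.
    (if n mod Bvec s b (tau_k s b k) = (ytil s b M m + nat (Acoef s b M k)) mod Bvec s b (tau_k s b k)
     then 1 else 0) - 1 / real (Bvec s b (tau_k s b k)))"
  unfolding discr_def indicator_halton_box prod_ypt_eq_sum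
  by (simp only: sum_subtractf[symmetric]) (rule sum.swap)

lemma alpha_eq_sum:
  "alpha s b M m = (\<Sum>k\<in>{..<s} \<rightarrow>\<^sub>E {1..m}.
    1 / 2 - real_of_int (Acoef s b M k) / real (Bvec s b (tau_k s b k))
      - 1 / (2 * real (Bvec s b (tau_k s b k))))"
proof -
  define a where "a = ytil s b M m"
  define P where "P = Bvec s b (tau_l s b m)"
  define Q where "Q k = Bvec s b (tau_k s b k)" for k
  have "alpha s b M m = (\<Sum>k\<in>{..<s} \<rightarrow>\<^sub>E {1..m}. 1 / real P * (\<Sum>N\<in>{1..P}. \<Sum>n\<in>{a..<a + N}.
      (if n mod Q k = (a + nat (Acoef s b M k)) mod Q k then 1 else 0) - 1 / real (Q k)))"
    unfolding alpha_def Let_def discr_ypt_eq_sum a_def[symmetric] P_def[symmetric] Q_def[symmetric]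
    by (simp only: sum.swap[of _ "{1..P}"] sum_distrib_left)
  also have "\<dots> = (\<Sum>k\<in>{..<s} \<rightarrow>\<^sub>E {1..m}.
      1 / 2 - real_of_int (Acoef s b M k) / real (Q k) - 1 / (2 * real (Q k)))"
  proof (rule sum.cong)
    fix k assume k: "k \<in> {..<s} \<rightarrow>\<^sub>E {1..m}"
    have "nat (Acoef s b M k) < Q k" "real (nat (Acoef s b M k)) = real_of_int (Acoef s b M k)"
      using Acoef_bounds[of k] by (simp_all add: Q_def)
    then show "1 / real P * (\<Sum>N\<in>{1..P}. \<Sum>n\<in>{a..<a + N}.
        (if n mod Q k = (a + nat (Acoef s b M k)) mod Q k then 1 else 0) - 1 / real (Q k)) =
      1 / 2 - real_of_int (Acoef s b M k) / real (Q k) - 1 / (2 * real (Q k))"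
      using average_sawtooth[of "nat (Acoef s b M k)" "Q k" _ a] Bvec_pos[of s b, OF b_pos]
      unfolding P_def Bvec_tau_l_eq_mult[OF k] Q_def by simp
  qed simp
  finally show ?thesis
    unfolding Q_def .
qed

end

theorem lemma4p4:
  fixes s m :: nat and b :: "nat \<Rightarrow> nat" and M :: "nat \<Rightarrow> (nat \<Rightarrow> nat) \<Rightarrow> int"
  assumes "s \<ge> 2"
    and "\<And>i. i < s \<Longrightarrow> b i \<ge> 2"
    and "\<And>i j. i < s \<Longrightarrow> j < s \<Longrightarrow> i \<noteq> j \<Longrightarrow> coprime (b i) (b j)"
    and "m \<ge> (\<Prod>i<s. b i)"
    and "\<And>r i. (\<forall>j<s. 0 < r j) \<Longrightarrow> i < s \<Longrightarrow>
           [M i r * int (Bvec s b r div b i ^ r i) = 1] (mod int (b i ^ r i))"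
  shows "alpha s b M m =
    (\<Sum>k\<in>{..<s} \<rightarrow>\<^sub>E {1..m}.
       1 / 2 - real_of_int (Acoef s b M k) / real (Bvec s b (tau_k s b k))
             - 1 / (2 * real (Bvec s b (tau_k s b k))))"
proof -
  interpret halton_setting s b M
    using assms(1-3,5) by unfold_locales
  show ?thesis
    by (rule alpha_eq_sum)
qed

end
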